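(* For each $d\ge 4$, there are at least $2^{d-3}$ finitely constrained subgroups of $\mathrm{Aut}(X^* )$ defined by patterns of size $d$ with Hausdorff dimension $1-\frac{2}{2^{d-1}}$ that are not topologically finitely generated.
   Context: Let $X=\{0,1\}$, $X^*$ the rooted binary tree of finite words, $G=\mathrm{Aut}(X^* )$, $G(d)$ the automorphism group of the finite tree of words of length $\le d$. Sections $g(wv)=g(w)g_w(v)$; $\pi_k$ restriction to words of length $\le k$. A subgroup $P\le G(d)$ is an essential pattern group if for every $p\in P$ and $i\in\{0,1\}$ there is $q\in P$ with $\pi_{d-1}(q)=p_i$; $G_P=\{g\in G:\pi_d(g_w)\in P\ \forall w\}$. A subgroup is finitely constrained if it equals some $G_P$, and defined by patterns of size $d$ if $d$ is the minimal such size. $\mathrm{Hdim}(K)=\liminf_n\log_2|K(n)|/\log_2|G(n)|$ with $K(n)=\pi_n(K)$. A closed subgroup is topologically finitely generated if it contains a finitely generated subgroup dense in the profinite topology. *)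

theory Defs
  imports Complex_Main "HOL-Library.Sublist" "HOL-Library.Liminf_Limsup" "HOL-Library.Extended_Real"
begin

text \<open>Vertices of the rooted binary tree X* are words over X = {0,1}, modelled as bool lists.\<close>

definition tree_aut :: "(bool list \<Rightarrow> bool list) \<Rightarrow> bool" where
  "tree_aut g \<longleftrightarrow> bij g \<and> (\<forall>w. length (g w) = length w)
     \<and> (\<forall>u v. prefix u v \<longrightarrow> prefix (g u) (g v))"

definition AutT :: "(bool list \<Rightarrow> bool list) set" where
  "AutT = {g. tree_aut g}"

text \<open>Automorphisms of the finite tree of words of length at most d, extended by the identity.\<close>
definition fin_aut :: "nat \<Rightarrow> (bool list \<Rightarrow> bool list) \<Rightarrow> bool" where
  "fin_aut d h \<longleftrightarrow> bij h \<and> (\<forall>w. length (h w) = length w)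
     \<and> (\<forall>w. d < length w \<longrightarrow> h w = w)
     \<and> (\<forall>u v. length v \<le> d \<longrightarrow> prefix u v \<longrightarrow> prefix (h u) (h v))"

definition AutD :: "nat \<Rightarrow> (bool list \<Rightarrow> bool list) set" where
  "AutD d = {h. fin_aut d h}"

definition proj :: "nat \<Rightarrow> (bool list \<Rightarrow> bool list) \<Rightarrow> (bool list \<Rightarrow> bool list)" where
  "proj k g = (\<lambda>w. if length w \<le> k then g w else w)"

text \<open>Section g_w, defined by g(wv) = g(w) g_w(v).\<close>
definition sect :: "(bool list \<Rightarrow> bool list) \<Rightarrow> bool list \<Rightarrow> (bool list \<Rightarrow> bool list)" where
  "sect g w = (\<lambda>v. drop (length w) (g (w @ v)))"

definition is_subgroup_of :: "(bool list \<Rightarrow> bool list) set \<Rightarrow> (bool list \<Rightarrow> bool list) set \<Rightarrow> bool" where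
  "is_subgroup_of H A \<longleftrightarrow> H \<subseteq> A \<and> id \<in> H \<and> (\<forall>p\<in>H. \<forall>q\<in>H. p \<circ> q \<in> H) \<and> (\<forall>p\<in>H. inv p \<in> H)"

text \<open>Essential pattern group of size d; the section p_i of p in G(d) is pi_{d-1}(p_[i]).\<close>
definition essential_pattern_group :: "nat \<Rightarrow> (bool list \<Rightarrow> bool list) set \<Rightarrow> bool" where
  "essential_pattern_group d P \<longleftrightarrow> is_subgroup_of P (AutD d) \<and>
     (\<forall>p\<in>P. \<forall>i::bool. \<exists>q\<in>P. proj (d - 1) q = proj (d - 1) (sect p [i]))"

definition GP :: "nat \<Rightarrow> (bool list \<Rightarrow> bool list) set \<Rightarrow> (bool list \<Rightarrow> bool list) set" where
  "GP d P = {g \<in> AutT. \<forall>w. proj d (sect g w) \<in> P}"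

definition constrained_by_size :: "nat \<Rightarrow> (bool list \<Rightarrow> bool list) set \<Rightarrow> bool" where
  "constrained_by_size d K \<longleftrightarrow> (\<exists>P. essential_pattern_group d P \<and> K = GP d P)"

definition finitely_constrained :: "(bool list \<Rightarrow> bool list) set \<Rightarrow> bool" where
  "finitely_constrained K \<longleftrightarrow> (\<exists>d. constrained_by_size d K)"

definition defined_by_patterns_of_size :: "nat \<Rightarrow> (bool list \<Rightarrow> bool list) set \<Rightarrow> bool" where
  "defined_by_patterns_of_size d K \<longleftrightarrow> constrained_by_size d K \<and> (\<forall>d'<d. \<not> constrained_by_size d' K)"

definition Hdim :: "(bool list \<Rightarrow> bool list) set \<Rightarrow> ereal" where
  "Hdim K = liminf (\<lambda>n. ereal (log 2 (real (card (proj n ` K))) / log 2 (real (card (AutD n)))))"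

inductive_set gen_subgroup :: "(bool list \<Rightarrow> bool list) set \<Rightarrow> (bool list \<Rightarrow> bool list) set"
  for S where
    gen_id: "id \<in> gen_subgroup S"
  | gen_base: "s \<in> S \<Longrightarrow> s \<in> gen_subgroup S"
  | gen_comp: "p \<in> gen_subgroup S \<Longrightarrow> q \<in> gen_subgroup S \<Longrightarrow> p \<circ> q \<in> gen_subgroup S"
  | gen_inv: "p \<in> gen_subgroup S \<Longrightarrow> inv p \<in> gen_subgroup S"

text \<open>H is dense in K for the profinite topology: every basic (cylinder) neighbourhood
  {h. proj n h = proj n g} of a point g of K meets H.\<close>
definition dense_in :: "(bool list \<Rightarrow> bool list) set \<Rightarrow> (bool list \<Rightarrow> bool list) set \<Rightarrow> bool" where
  "dense_in H K \<longleftrightarrow> (\<forall>g\<in>K. \<forall>n. \<exists>h\<in>H. proj n h = proj n g)"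

definition top_fin_gen :: "(bool list \<Rightarrow> bool list) set \<Rightarrow> bool" where
  "top_fin_gen K \<longleftrightarrow> (\<exists>S. finite S \<and> S \<subseteq> K \<and> gen_subgroup S \<subseteq> K \<and> dense_in (gen_subgroup S) K)"

end

theory Submission
  imports Defs
begin

text \<open>Write \<open>d = D + 2\<close> and describe automorphisms by their portraits, the labels at the vertices
  saying whether the two children are swapped. For each \<open>T \<subseteq> {1..D}\<close> containing \<open>D\<close> (there are
  \<open>2 ^ (D - 1)\<close> of them), let \<open>K\<close> consist of the automorphisms whose portrait has, below every
  non-root vertex \<open>v\<close>, an even number of labels at distances \<open>j \<in> T\<close> below \<open>v\<close>. Modulo 2 these
  counts are additive, so \<open>K\<close> is a group; the condition is seen by patterns of size \<open>D + 2\<close>, and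
  by no smaller size because a single label at depth \<open>D + 1\<close> violates it but is invisible to
  smaller patterns. The label at \<open>v @ replicate D False\<close> is determined by the others, which are
  free, so \<open>K\<close> keeps all labels but a fraction \<open>2 ^ -D\<close> of them and has Hausdorff dimension
  \<open>1 - 2 ^ -D\<close>. Finally, for every depth \<open>i\<close> a parity of label counts near level \<open>i\<close> is a
  continuous homomorphism \<open>K \<rightarrow> \<int>/2\<close>; these are independent, so \<open>K\<close> maps onto every
  \<open>(\<int>/2)^N\<close> and is not topologically finitely generated. Different \<open>T\<close> give different \<open>K\<close>.\<close>

section \<open>Portraits\<close>

text \<open>\<open>aut a\<close> is the automorphism with portrait \<open>a\<close>: it swaps the two children of \<open>u\<close> iff \<open>a u\<close>.\<close>

fun aut :: "(bool list \<Rightarrow> bool) \<Rightarrow> bool list \<Rightarrow> bool list" where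
  "aut a [] = []"
| "aut a (x # w) = (x \<noteq> a []) # aut (\<lambda>u. a (x # u)) w"

definition portrait :: "(bool list \<Rightarrow> bool list) \<Rightarrow> bool list \<Rightarrow> bool" where
  "portrait g u = g (u @ [False]) ! length u"

lemma length_aut [simp]: "length (aut a w) = length w"
  by (induct w arbitrary: a) auto

lemma aut_append: "aut a (u @ v) = aut a u @ aut (\<lambda>y. a (u @ y)) v"
  by (induct u arbitrary: a) auto

lemma aut_snoc: "aut a (w @ [x]) = aut a w @ [x \<noteq> a w]"
  by (simp add: aut_append)

lemma aut_Nil_iff [simp]: "aut a w = [] \<longleftrightarrow> w = []"
  by (metis length_0_conv length_aut)

lemma inj_aut: "inj (aut a)"
proof (rule injI)
  fix u v show "aut a u = aut a v \<Longrightarrow> u = v"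
  proof (induct u arbitrary: a v)
    case (Cons x u)
    then obtain y v' where v: "v = y # v'" by (cases v) auto
    with Cons.prems have "x = y" by (cases x; cases y) auto
    with Cons v show ?case by auto
  qed (metis aut_Nil_iff)
qed

lemma surj_aut: "surj (aut a)"
proof -
  have "\<exists>w. aut a w = y" for y
  proof (induct y arbitrary: a)
    case (Cons z y)
    then obtain w where "aut (\<lambda>u. a ((z \<noteq> a []) # u)) w = y" by blast
    then show ?case by (intro exI[of _ "(z \<noteq> a []) # w"]) auto
  qed simp
  then show ?thesis by (metis surjI)
qed

lemma bij_aut: "bij (aut a)"
  by (simp add: bij_def inj_aut surj_aut)

lemma tree_aut_aut: "tree_aut (aut a)"
  by (auto simp: tree_aut_def bij_aut prefix_def aut_append)

lemma portrait_aut [simp]: "portrait (aut a) = a"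
  by (rule ext) (simp add: portrait_def aut_snoc nth_append)

lemma aut_eq_iff: "aut a = aut b \<longleftrightarrow> a = b"
  by (metis portrait_aut)

lemma snoc_eq_portrait:
  assumes inj: "inj g" and len: "\<And>w. length (g w) = length w"
    and pre: "\<And>y. prefix (g w) (g (w @ [y]))"
  shows "g (w @ [x]) = g w @ [x \<noteq> portrait g w]"
proof -
  have child: "g (w @ [y]) = g w @ [g (w @ [y]) ! length w]" for y
  proof -
    obtain r where r: "g (w @ [y]) = g w @ r" using pre[of y] by (auto simp: prefix_def)
    with len[of w] len[of "w @ [y]"] obtain c where "r = [c]"
      by (cases r) auto
    with r len[of w] show ?thesis by (simp add: nth_append)
  qed
  have "g (w @ [True]) \<noteq> g (w @ [False])" using inj by (auto dest: injD)
  then have "g (w @ [True]) ! length w = (\<not> portrait g w)"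
    using child[of True] child[of False] unfolding portrait_def by (metis (full_types))
  then show ?thesis using child[of x] by (cases x) (simp_all add: portrait_def)
qed

lemma aut_portrait:
  assumes "tree_aut g"
  shows "aut (portrait g) = g"
proof
  have "inj g" and len: "\<And>w. length (g w) = length w"
    and "\<And>u v. prefix u v \<Longrightarrow> prefix (g u) (g v)"
    using assms by (auto simp: tree_aut_def bij_def)
  then show "aut (portrait g) w = g w" for w
    by (induct w rule: rev_induct)
      (simp_all add: aut_snoc snoc_eq_portrait len[of "[]", simplified])
qed

lemma AutT_eq_range_aut: "AutT = range aut"
proof
  show "AutT \<subseteq> range aut"
    unfolding AutT_def using aut_portrait by (blast intro: sym)
qed (auto simp: AutT_def tree_aut_aut)

definition portrait_mult :: "(bool list \<Rightarrow> bool) \<Rightarrow> (bool list \<Rightarrow> bool) \<Rightarrow> bool list \<Rightarrow> bool" where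
  "portrait_mult a b = (\<lambda>u. b u \<noteq> a (aut b u))"

lemma aut_comp: "aut a \<circ> aut b = aut (portrait_mult a b)"
proof
  show "(aut a \<circ> aut b) w = aut (portrait_mult a b) w" for w
    by (induct w rule: rev_induct) (auto simp: aut_snoc portrait_mult_def)
qed

lemma aut_zero: "aut (\<lambda>_. False) = id"
proof
  show "aut (\<lambda>_. False) w = id w" for w
    by (induct w rule: rev_induct) (auto simp: aut_snoc)
qed

lemma tree_aut_inv:
  assumes "tree_aut g"
  shows "tree_aut (inv g)"
proof -
  have bij: "bij g" and len: "\<And>w. length (g w) = length w"
    and mono: "\<And>u v. prefix u v \<Longrightarrow> prefix (g u) (g v)"
    using assms unfolding tree_aut_def by auto
  have g_inv: "g (inv g w) = w" for w using bij by (simp add: bij_is_surj surj_f_inv_f)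
  have inv_g: "inv g (g w) = w" for w using bij by (simp add: bij_is_inj)
  have len_inv: "length (inv g w) = length w" for w by (metis g_inv len)
  have "prefix (inv g u) (inv g v)" if "prefix u v" for u v
  proof -
    let ?x = "take (length u) (inv g v)"
    have "prefix (g ?x) v" using mono[OF take_is_prefix] g_inv by metis
    moreover have "length (g ?x) = length u"
      using len len_inv prefix_length_le[OF that] by simp
    ultimately have "g ?x = u"
      using that by (metis prefix_length_prefix prefix_order.eq_iff order_refl)
    then show ?thesis using inv_g take_is_prefix by metis
  qed
  then show ?thesis unfolding tree_aut_def using bij_imp_bij_inv[OF bij] len_inv by auto
qed

lemma inv_aut: "\<exists>b. inv (aut a) = aut b \<and> portrait_mult a b = (\<lambda>_. False)"
proof -
  let ?b = "portrait (inv (aut a))"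
  have b: "inv (aut a) = aut ?b" by (simp add: aut_portrait tree_aut_inv tree_aut_aut)
  then have "aut a \<circ> aut ?b = id" by (metis bij_aut bij_is_surj surj_iff)
  then have "portrait_mult a ?b = (\<lambda>_. False)" by (simp add: aut_comp aut_eq_iff flip: aut_zero)
  with b show ?thesis by blast
qed

lemma proj_aut_eq_iff:
  "proj n (aut a) = proj n (aut b) \<longleftrightarrow> (\<forall>u. length u < n \<longrightarrow> a u = b u)"
proof
  assume eq: "proj n (aut a) = proj n (aut b)"
  show "\<forall>u. length u < n \<longrightarrow> a u = b u"
  proof (intro allI impI)
    fix u :: "bool list" assume "length u < n"
    with fun_cong[OF eq, of "u @ [False]"] show "a u = b u" by (simp add: proj_def aut_snoc)
  qed
next
  assume agree: "\<forall>u. length u < n \<longrightarrow> a u = b u"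
  have "length w \<le> n \<Longrightarrow> aut a w = aut b w" for w
    by (induct w rule: rev_induct) (simp_all add: aut_snoc agree)
  then show "proj n (aut a) = proj n (aut b)" by (auto simp: proj_def)
qed

lemma proj_proj: "m \<le> n \<Longrightarrow> proj m (proj n g) = proj m g"
  by (auto simp: proj_def)

lemma proj_comp: "(\<And>w. length (g w) = length w) \<Longrightarrow> proj n f \<circ> proj n g = proj n (f \<circ> g)"
  by (auto simp: proj_def)

lemma proj_id [simp]: "proj n id = id"
  by (auto simp: proj_def)

lemma inv_proj:
  assumes "f \<circ> g = id" "g \<circ> f = id" "\<And>w. length (f w) = length w" "\<And>w. length (g w) = length w"
  shows "inv (proj n f) = proj n g"
  by (rule inv_unique_comp) (simp_all add: assms proj_comp)

lemma sect_aut: "sect (aut a) w = aut (\<lambda>y. a (w @ y))"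
  by (auto simp: sect_def aut_append)

lemma fin_aut_proj_aut: "fin_aut n (proj n (aut a))"
proof -
  let ?h = "proj n (aut a)"
  have "inj ?h"
    by (rule injI) (auto simp: proj_def dest: injD[OF inj_aut] split: if_splits)
  moreover have "surj ?h"
  proof (rule surjI)
    fix y
    have "aut a (inv (aut a) y) = y" by (rule surj_f_inv_f[OF surj_aut])
    then show "?h (if length y \<le> n then inv (aut a) y else y) = y"
      by (auto simp: proj_def dest: arg_cong[of _ _ length])
  qed
  moreover have "prefix (?h u) (?h v)" if "length v \<le> n" "prefix u v" for u v
    using that by (auto simp: proj_def prefix_def aut_append)
  ultimately show ?thesis by (auto simp: fin_aut_def bij_def proj_def)
qed

lemma fin_aut_eq_proj_aut:
  assumes "fin_aut n h"
  shows "h = proj n (aut (portrait h))"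
proof
  fix w
  have "inj h" and len: "\<And>w. length (h w) = length w" and fix_deep: "\<And>w. n < length w \<Longrightarrow> h w = w"
    and mono: "\<And>u v. length v \<le> n \<Longrightarrow> prefix u v \<Longrightarrow> prefix (h u) (h v)"
    using assms by (auto simp: fin_aut_def bij_def)
  have "length w \<le> n \<Longrightarrow> h w = aut (portrait h) w"
  proof (induct w rule: rev_induct)
    case (snoc x w)
    then have "h (w @ [x]) = h w @ [x \<noteq> portrait h w]"
      by (intro snoc_eq_portrait[OF \<open>inj h\<close> len] mono) auto
    with snoc show ?case by (simp add: aut_snoc)
  qed (use len[of "[]"] in simp)
  then show "h w = proj n (aut (portrait h)) w" using fix_deep by (auto simp: proj_def)
qed

lemma AutD_eq_range: "AutD n = range (\<lambda>a. proj n (aut a))"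
  unfolding AutD_def using fin_aut_eq_proj_aut fin_aut_proj_aut by blast

section \<open>Counting labels\<close>

definition labellings_on :: "bool list set \<Rightarrow> (bool list \<Rightarrow> bool) set" where
  "labellings_on A = {f. \<forall>u. f u \<longrightarrow> u \<in> A}"

lemma card_labellings_on:
  assumes "finite A"
  shows "card (labellings_on A) = 2 ^ card A"
proof -
  have "bij_betw (\<lambda>f. {u. f u}) (labellings_on A) (Pow A)"
    by (rule bij_betw_byWitness[where f' = "\<lambda>B u. u \<in> B"]) (auto simp: labellings_on_def)
  then show ?thesis using assms by (simp add: bij_betw_same_card card_Pow)
qed

definition words :: "nat \<Rightarrow> bool list set" where
  "words j = {y. length y = j}"

lemma words_eq_lists: "words j = {xs. set xs \<subseteq> UNIV \<and> length xs = j}"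
  by (auto simp: words_def)

lemma finite_words [simp]: "finite (words j)"
  unfolding words_eq_lists by (rule finite_lists_length_eq) simp

lemma card_words: "card (words j) = 2 ^ j"
  unfolding words_eq_lists by (subst card_lists_length_eq) simp_all

lemma finite_short_words [simp]: "finite {u :: bool list. length u < n}"
proof -
  have "{u :: bool list. length u < n} = (\<Union>j<n. words j)" by (auto simp: words_def)
  then show ?thesis by simp
qed

lemma card_short_words: "card {u :: bool list. length u < n} = 2 ^ n - 1"
proof (induct n)
  case (Suc n)
  have "{u :: bool list. length u < Suc n} = {u. length u < n} \<union> words n"
    by (auto simp: words_def)
  moreover have "card ({u :: bool list. length u < n} \<union> words n)
      = card {u :: bool list. length u < n} + card (words n)"
    by (rule card_Un_disjoint) (simp_all, auto simp: words_def)
  ultimately show ?case using Suc by (simp add: card_words)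
qed simp

lemma card_nonempty_short_words:
  "1 \<le> m \<Longrightarrow> card {v :: bool list. v \<noteq> [] \<and> length v < m} = 2 ^ m - 2"
proof -
  assume "1 \<le> m"
  have "{v :: bool list. v \<noteq> [] \<and> length v < m} = {v. length v < m} - {[]}" by auto
  with \<open>1 \<le> m\<close> show ?thesis by (simp add: card_short_words)
qed

lemma card_AutD: "card (AutD n) = 2 ^ (2 ^ n - 1)"
proof -
  let ?A = "labellings_on {u. length u < n}"
  have "AutD n = (\<lambda>a. proj n (aut a)) ` ?A"
  proof -
    have "proj n (aut a) = proj n (aut (\<lambda>u. a u \<and> length u < n))" for a
      by (simp add: proj_aut_eq_iff)
    then show ?thesis unfolding AutD_eq_range by (auto simp: labellings_on_def)
  qed
  moreover have "inj_on (\<lambda>a. proj n (aut a)) ?A"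
    by (rule inj_onI) (auto simp: proj_aut_eq_iff labellings_on_def)
  ultimately have "card (AutD n) = card ?A" by (simp add: card_image)
  then show ?thesis by (simp add: card_labellings_on card_short_words)
qed

definition level_count :: "nat \<Rightarrow> (bool list \<Rightarrow> bool) \<Rightarrow> bool list \<Rightarrow> nat" where
  "level_count j a v = (\<Sum>y\<in>words j. if a (v @ y) then 1 else 0)"

lemma level_count_cong:
  "(\<And>y. length y = j \<Longrightarrow> a (v @ y) = b (v @ y)) \<Longrightarrow> level_count j a v = level_count j b v"
  unfolding level_count_def words_def by (rule sum.cong) auto

lemma level_count_zero [simp]: "level_count j (\<lambda>_. False) v = 0"
  by (simp add: level_count_def)

lemma level_count_shift: "level_count j (\<lambda>y. a (w @ y)) v = level_count j a (w @ v)"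
  by (simp add: level_count_def)

lemma level_count_Suc:
  "level_count (Suc j) a v = level_count j a (v @ [False]) + level_count j a (v @ [True])"
proof -
  have split: "words (Suc j) = Cons False ` words j \<union> Cons True ` words j"
    by (auto simp: words_def image_iff length_Suc_conv)
  have "level_count (Suc j) a v
      = (\<Sum>y\<in>Cons False ` words j. if a (v @ y) then 1 else 0)
      + (\<Sum>y\<in>Cons True ` words j. if a (v @ y) then 1 else 0)"
    unfolding level_count_def split by (rule sum.union_disjoint) auto
  then show ?thesis by (simp add: level_count_def sum.reindex)
qed

lemma level_count_disj:
  assumes "\<And>u. \<not> (P u \<and> Q u)"
  shows "level_count j (\<lambda>u. P u \<or> Q u) v = level_count j P v + level_count j Q v"
  unfolding level_count_def using assms by (auto simp: sum.distrib[symmetric] intro!: sum.cong)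

lemma level_count_point:
  "level_count j (\<lambda>u. u = c) v = (if take (length v) c = v \<and> length c = length v + j then 1 else 0)"
proof (cases "take (length v) c = v \<and> length c = length v + j")
  case True
  then have "v @ y = c \<longleftrightarrow> y = drop (length v) c" for y by (metis append_eq_conv_conj)
  then have "level_count j (\<lambda>u. u = c) v = (\<Sum>y\<in>words j. if y = drop (length v) c then 1 else 0)"
    by (simp add: level_count_def)
  moreover have "drop (length v) c \<in> words j" using True by (simp add: words_def)
  ultimately show ?thesis using True by simp
next
  case False
  then have "v @ y \<noteq> c" if "y \<in> words j" for y using that by (auto simp: words_def)
  with False show ?thesis by (simp add: level_count_def)
qed

lemma level_count_upd:
  assumes "\<not> a u"
  shows "level_count j (a(u := x)) v
    = level_count j a v + (if x \<and> take (length v) u = v \<and> length u = length v + j then 1 else 0)"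
proof -
  have "a(u := x) = (\<lambda>w. a w \<or> (x \<and> w = u))" using assms by (auto simp: fun_eq_iff)
  moreover have "level_count j (\<lambda>w. a w \<or> (x \<and> w = u)) v
      = level_count j a v + level_count j (\<lambda>w. x \<and> w = u) v"
    by (rule level_count_disj) (use assms in auto)
  ultimately show ?thesis using level_count_point[of j u v] by (cases x) simp_all
qed

lemma bij_betw_aut_words: "bij_betw (aut b) (words j) (words j)"
proof -
  have "aut b ` words j = words j"
    using surj_aut[of b] by (auto simp: words_def image_iff) (metis length_aut surj_f_inv_f)
  then show ?thesis by (simp add: bij_betw_def inj_on_subset[OF inj_aut])
qed

lemma level_count_aut: "level_count j (\<lambda>u. a (aut b u)) v = level_count j a (aut b v)"
proof -
  have "level_count j (\<lambda>u. a (aut b u)) v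
      = (\<Sum>y\<in>words j. if a (aut b v @ aut (\<lambda>t. b (v @ t)) y) then 1 else 0)"
    by (simp add: level_count_def aut_append)
  also have "\<dots> = level_count j a (aut b v)"
    unfolding level_count_def by (rule sum.reindex_bij_betw[OF bij_betw_aut_words])
  finally show ?thesis .
qed

text \<open>Modulo 2, counting labels is additive under \<open>portrait_mult\<close>: this is what makes
  parity conditions on level counts define subgroups.\<close>

lemma even_level_count_mult:
  "even (level_count j (portrait_mult a b) v + level_count j b v + level_count j a (aut b v))"
proof -
  have "level_count j (portrait_mult a b) v + level_count j b v + level_count j a (aut b v)
      = (\<Sum>y\<in>words j. (if portrait_mult a b (v @ y) then 1 else 0) + (if b (v @ y) then 1 else 0)
          + (if a (aut b (v @ y)) then 1 else 0))"
    unfolding level_count_def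
    by (simp add: sum.distrib flip: level_count_aut[of j a b v, unfolded level_count_def])
  then show ?thesis by (auto intro!: dvd_sum simp: portrait_mult_def)
qed

section \<open>Independent characters obstruct topological finite generation\<close>

lemma odd_card_symdiff:
  assumes "finite A" "finite B"
  shows "odd (card {s \<in> (A - B) \<union> (B - A). P s})
    \<longleftrightarrow> odd (card {s \<in> A. P s}) \<noteq> odd (card {s \<in> B. P s})"
proof -
  let ?A = "{s \<in> A. P s}" and ?B = "{s \<in> B. P s}"
  have fin: "finite ?A" "finite ?B" using assms by auto
  have "{s \<in> (A - B) \<union> (B - A). P s} = (?A \<union> ?B) - (?A \<inter> ?B)" by auto
  moreover have "card (?A \<union> ?B) + card (?A \<inter> ?B) = card ?A + card ?B"
    using fin by (rule card_Un_Int[symmetric])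
  moreover have "card ((?A \<union> ?B) - (?A \<inter> ?B)) = card (?A \<union> ?B) - card (?A \<inter> ?B)"
    using fin by (intro card_Diff_subset) auto
  moreover have "card (?A \<inter> ?B) \<le> card (?A \<union> ?B)" using fin by (intro card_mono) auto
  ultimately show ?thesis by presburger
qed

lemma gen_subgroup_character_combination:
  assumes S: "gen_subgroup S \<subseteq> K" "finite S" and K: "K \<subseteq> AutT"
    and mult: "\<And>i p q. p \<in> K \<Longrightarrow> q \<in> K \<Longrightarrow> chi i (p \<circ> q) = (chi i p \<noteq> chi i q)"
    and h: "h \<in> gen_subgroup S"
  shows "\<exists>B\<subseteq>S. \<forall>i. chi i h = odd (card {s \<in> B. chi i s})"
proof -
  have id_K: "id \<in> K" using S gen_subgroup.gen_id by blast
  have chi_id: "\<not> chi i id" for i using mult[OF id_K id_K, of i] by simp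
  from h show ?thesis
  proof (induct rule: gen_subgroup.induct)
    case gen_id
    show ?case using chi_id by (intro exI[of _ "{}"]) (simp add: id_def)
  next
    case (gen_base s)
    have "{s' \<in> {s}. chi i s'} = (if chi i s then {s} else {})" for i by auto
    with gen_base show ?case by (intro exI[of _ "{s}"]) auto
  next
    case (gen_comp p q)
    then obtain A B where AB: "A \<subseteq> S" "B \<subseteq> S"
      and p: "\<forall>i. chi i p = odd (card {s \<in> A. chi i s})"
      and q: "\<forall>i. chi i q = odd (card {s \<in> B. chi i s})"
      by blast
    have fin: "finite A" "finite B" using S AB by (auto intro: finite_subset)
    have "p \<in> K" "q \<in> K" using gen_comp.hyps S by auto
    then have "chi i (p \<circ> q) = odd (card {s \<in> (A - B) \<union> (B - A). chi i s})" for i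
      unfolding odd_card_symdiff[OF fin] using p q by (simp add: mult)
    moreover have "(A - B) \<union> (B - A) \<subseteq> S" using AB by blast
    ultimately show ?case by blast
  next
    case (gen_inv p)
    have p: "p \<in> K" "inv p \<in> K" using gen_inv.hyps S gen_subgroup.gen_inv by blast+
    then have "bij p" using K by (auto simp: AutT_def tree_aut_def)
    then have "p \<circ> inv p = id" by (rule surj_iff[THEN iffD1, OF bij_is_surj])
    then have "chi i (inv p) = chi i p" for i using mult[OF p, of i] chi_id by auto
    with gen_inv show ?case by simp
  qed
qed

lemma character_values_realized:
  assumes closed: "\<And>p q. p \<in> K \<Longrightarrow> q \<in> K \<Longrightarrow> p \<circ> q \<in> K" and id_K: "id \<in> K"
    and mult: "\<And>i p q. p \<in> K \<Longrightarrow> q \<in> K \<Longrightarrow> chi i (p \<circ> q) = (chi i p \<noteq> chi i q)"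
    and unit: "\<And>i. \<exists>e\<in>K. \<forall>j. chi j e = (j = i)"
    and I: "finite I"
  shows "\<exists>k\<in>K. \<forall>i. chi i k = (i \<in> I)"
  using I
proof (induct I rule: finite_induct)
  case empty
  show ?case using mult[OF id_K id_K] id_K by auto
next
  case (insert i I)
  then obtain k e where k: "k \<in> K" "\<forall>j. chi j k = (j \<in> I)" and e: "e \<in> K" "\<forall>j. chi j e = (j = i)"
    using unit by blast
  then have "chi j (k \<circ> e) = (j \<in> insert i I)" for j
    using insert.hyps(2) mult[OF k(1) e(1), of j] by auto
  then show ?case using closed[OF k(1) e(1)] by blast
qed

text \<open>The first \<open>N\<close> characters map \<open>K\<close> onto \<open>(\<int>/2)^N\<close>, whereas they map the subgroup
  generated by \<open>S\<close> into a subgroup with at most \<open>2 ^ card S\<close> elements; by continuity a dense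
  subgroup has the same image as \<open>K\<close>.\<close>

theorem not_top_fin_gen_if_independent_characters:
  fixes chi :: "nat \<Rightarrow> (bool list \<Rightarrow> bool list) \<Rightarrow> bool"
  assumes K: "K \<subseteq> AutT" and closed: "\<And>p q. p \<in> K \<Longrightarrow> q \<in> K \<Longrightarrow> p \<circ> q \<in> K"
    and mult: "\<And>i p q. p \<in> K \<Longrightarrow> q \<in> K \<Longrightarrow> chi i (p \<circ> q) = (chi i p \<noteq> chi i q)"
    and local: "\<And>i n p q. depth i \<le> n \<Longrightarrow> p \<in> K \<Longrightarrow> q \<in> K \<Longrightarrow> proj n p = proj n q \<Longrightarrow> chi i p = chi i q"
    and unit: "\<And>i. \<exists>e\<in>K. \<forall>j. chi j e = (j = i)"
  shows "\<not> top_fin_gen K"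
proof
  assume "top_fin_gen K"
  then obtain S where S: "finite S" "gen_subgroup S \<subseteq> K" and dense: "dense_in (gen_subgroup S) K"
    unfolding top_fin_gen_def by blast
  have id_K: "id \<in> K" using S gen_subgroup.gen_id by blast
  define N where "N = Suc (card S)"
  define n where "n = Max (depth ` {..<N})"
  define span where "span B = {i. i < N \<and> odd (card {s \<in> B. chi i s})}" for B
  have "Pow {..<N} \<subseteq> span ` Pow S"
  proof
    fix I assume I: "I \<in> Pow {..<N}"
    then have "finite I" by (auto intro: finite_subset)
    then obtain k where k: "k \<in> K" "\<forall>i. chi i k = (i \<in> I)"
      using character_values_realized[where chi = chi, OF closed id_K mult unit] by blast
    obtain h where h: "h \<in> gen_subgroup S" "proj n h = proj n k"
      using dense k(1) unfolding dense_in_def by blast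
    have "chi i h = chi i k" if "i < N" for i
    proof (rule local[of i n])
      show "depth i \<le> n" unfolding n_def using that by (intro Max_ge) auto
    qed (use h S(2) k(1) in auto)
    moreover obtain B where "B \<subseteq> S" "\<forall>i. chi i h = odd (card {s \<in> B. chi i s})"
      using gen_subgroup_character_combination[where chi = chi, OF S(2,1) K mult h(1)] by blast
    ultimately have "I = span B" using I k(2) by (auto simp: span_def)
    with \<open>B \<subseteq> S\<close> show "I \<in> span ` Pow S" by blast
  qed
  then have "card (Pow {..<N}) \<le> card (span ` Pow S)" using S(1) by (intro card_mono) auto
  also have "\<dots> \<le> card (Pow S)" using S(1) by (intro card_image_le) simp
  finally have "(2::nat) ^ N \<le> 2 ^ card S" using S(1) by (simp add: card_Pow)
  then show False by (simp add: N_def)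
qed

section \<open>The groups defined by level parities\<close>

locale parity_family =
  fixes D :: nat and T :: "nat set"
  assumes T_subset: "T \<subseteq> {1..D}" and D_in_T: "D \<in> T"
begin

lemma finite_T [simp]: "finite T"
  using T_subset finite_subset by blast

definition weight :: "(bool list \<Rightarrow> bool) \<Rightarrow> bool list \<Rightarrow> nat" where
  "weight a v = (\<Sum>j\<in>T. level_count j a v)"

definition admissible :: "(bool list \<Rightarrow> bool) \<Rightarrow> bool" where
  "admissible a \<longleftrightarrow> (\<forall>v. v \<noteq> [] \<longrightarrow> even (weight a v))"

lemma weight_zero [simp]: "weight (\<lambda>_. False) v = 0"
  by (simp add: weight_def)

lemma weight_shift: "weight (\<lambda>y. a (w @ y)) v = weight a (w @ v)"
  by (simp add: weight_def level_count_shift)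

lemma weight_cong:
  "(\<And>y. 1 \<le> length y \<Longrightarrow> length y \<le> D \<Longrightarrow> a (v @ y) = b (v @ y)) \<Longrightarrow> weight a v = weight b v"
  unfolding weight_def using T_subset by (intro sum.cong refl level_count_cong) auto

lemma even_weight_mult: "even (weight (portrait_mult a b) v + weight b v + weight a (aut b v))"
proof -
  have "weight (portrait_mult a b) v + weight b v + weight a (aut b v)
      = (\<Sum>j\<in>T. level_count j (portrait_mult a b) v + level_count j b v + level_count j a (aut b v))"
    by (simp add: weight_def sum.distrib)
  then show ?thesis by (auto intro!: dvd_sum even_level_count_mult)
qed

lemma even_weight_portrait_mult:
  "even (weight a (aut b v)) \<Longrightarrow> even (weight b v) \<Longrightarrow> even (weight (portrait_mult a b) v)"
  using even_weight_mult[of a b v] by auto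

lemma even_weight_inverse:
  "even (weight a (aut b v)) \<Longrightarrow> portrait_mult a b = (\<lambda>_. False) \<Longrightarrow> even (weight b v)"
  using even_weight_mult[of a b v] by auto

lemma admissible_portrait_mult: "admissible a \<Longrightarrow> admissible b \<Longrightarrow> admissible (portrait_mult a b)"
  unfolding admissible_def by (metis aut_Nil_iff even_weight_portrait_mult)

lemma admissible_iff_snoc: "admissible a \<longleftrightarrow> (\<forall>w x. even (weight a (w @ [x])))"
  unfolding admissible_def by (metis rev_exhaust snoc_eq_iff_butlast)

lemma weight_upd:
  assumes "\<not> a u" "u = v @ y" "length y = D"
  shows "weight (a(u := x)) v = weight a v + (if x then 1 else 0)"
proof -
  have "weight (a(u := x)) v = (\<Sum>j\<in>T. level_count j a v + (if x \<and> j = D then 1 else 0))"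
    unfolding weight_def using assms by (intro sum.cong refl) (auto simp: level_count_upd)
  also have "\<dots> = weight a v + (if x then 1 else 0)"
    using D_in_T by (simp add: weight_def sum.distrib)
  finally show ?thesis .
qed

definition base :: "bool list \<Rightarrow> bool list" where
  "base u = take (length u - D) u"

definition dependent :: "bool list \<Rightarrow> bool" where
  "dependent u \<longleftrightarrow> base u \<noteq> [] \<and> u = base u @ replicate D False"

lemma base_append [simp]: "length y = D \<Longrightarrow> base (v @ y) = v"
  by (simp add: base_def)

lemma dependent_append: "v \<noteq> [] \<Longrightarrow> dependent (v @ replicate D False)"
  by (simp add: dependent_def)

lemma not_dependent_append: "length y = D \<Longrightarrow> y \<noteq> replicate D False \<Longrightarrow> \<not> dependent (v @ y)"
  by (simp add: dependent_def)

lemma length_dependent: "dependent u \<Longrightarrow> D < length u"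
  unfolding dependent_def
  by (metis length_append length_greater_0_conv length_replicate less_add_same_cancel2)

lemma weight_split:
  assumes "u = v @ replicate D False"
  shows "weight a v = weight (a(u := False)) v + (if a u then 1 else 0)"
  using weight_upd[of "a(u := False)" u v "replicate D False" "a u"] assms by simp

lemma weight_at_spike:
  assumes "1 \<le> r" "r < D" and a: "\<And>u. length u \<le> D \<Longrightarrow> a u = (u = False # replicate r False)"
  shows "weight a [False] = (if r \<in> T then 1 else 0) + level_count D a [False]"
proof -
  have "level_count j a [False] = (if r = j then 1 else 0)" if "j \<in> T - {D}" for j
  proof -
    have "j < D" using that T_subset by fastforce
    then have "level_count j a [False] = level_count j (\<lambda>u. u = False # replicate r False) [False]"
      by (intro level_count_cong) (simp add: a)
    then show ?thesis by (simp add: level_count_point)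
  qed
  then have "(\<Sum>j\<in>T - {D}. level_count j a [False]) = (if r \<in> T then 1 else 0)"
    using assms(2) by (simp add: sum.delta)
  then show ?thesis unfolding weight_def using D_in_T by (simp add: sum.remove)
qed

text \<open>Going up level by level, the completion fixes the label of each dependent vertex
  \<open>v @ replicate D False\<close> so that the weight at \<open>v\<close> becomes even; all other labels are those
  of \<open>f\<close>. The vertices contributing to the weight at \<open>v\<close> are either shorter, or independent.\<close>

primrec completion_upto :: "(bool list \<Rightarrow> bool) \<Rightarrow> nat \<Rightarrow> bool list \<Rightarrow> bool" where
  "completion_upto f 0 = f"
| "completion_upto f (Suc n) = (\<lambda>u. if length u = n \<and> dependent u
      then odd (weight ((completion_upto f n)(u := False)) (base u)) else completion_upto f n u)"

definition completion :: "(bool list \<Rightarrow> bool) \<Rightarrow> bool list \<Rightarrow> bool" where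
  "completion f u = completion_upto f (Suc (length u)) u"

lemma completion_upto_long: "n \<le> length u \<Longrightarrow> completion_upto f n u = f u"
  by (induct n) auto

lemma completion_upto_short: "length u < n \<Longrightarrow> completion_upto f n u = completion f u"
  by (induct n) (auto simp: completion_def less_Suc_eq)

lemma completion_independent: "\<not> dependent u \<Longrightarrow> completion f u = f u"
  by (simp add: completion_def completion_upto_long)

lemma completion_depth_le: "length u \<le> D \<Longrightarrow> completion f u = f u"
  using length_dependent completion_independent by fastforce

lemma admissible_completion: "admissible (completion f)"
  unfolding admissible_def
proof (intro allI impI)
  fix v :: "bool list" assume "v \<noteq> []"
  define u where "u = v @ replicate D False"
  define a where "a = (completion_upto f (length u))(u := False)"
  have "completion f u = odd (weight a v)"
    using \<open>v \<noteq> []\<close> by (simp add: completion_def a_def u_def dependent_append)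
  moreover have "weight (completion f) v = weight (a(u := completion f u)) v"
  proof (rule weight_cong)
    fix y :: "bool list" assume "length y \<le> D"
    show "completion f (v @ y) = (a(u := completion f u)) (v @ y)"
    proof (cases "length y < D")
      case True
      then show ?thesis by (auto simp: a_def u_def completion_upto_short)
    next
      case False
      with \<open>length y \<le> D\<close> have "length y = D" by simp
      then show ?thesis
        by (cases "y = replicate D False")
          (simp_all add: a_def u_def completion_upto_long completion_independent
            not_dependent_append)
    qed
  qed
  moreover have "weight (a(u := completion f u)) v = weight a v + (if completion f u then 1 else 0)"
    by (rule weight_upd) (auto simp: a_def u_def)
  ultimately show "even (weight (completion f) v)" by auto
qed

lemma admissible_eq_if_agree_independent:
  assumes "admissible a" "admissible b"
    and agree: "\<And>u. length u < n \<Longrightarrow> \<not> dependent u \<Longrightarrow> a u = b u"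
  shows "length u < n \<Longrightarrow> a u = b u"
proof (induct "length u" arbitrary: u rule: less_induct)
  case less
  show ?case
  proof (cases "dependent u")
    case False
    then show ?thesis using agree less by auto
  next
    case True
    define v where "v = base u"
    have u: "u = v @ replicate D False" and "v \<noteq> []"
      using True by (auto simp: dependent_def v_def)
    have "weight (a(u := False)) v = weight (b(u := False)) v"
    proof (rule weight_cong)
      fix y :: "bool list" assume "length y \<le> D"
      show "(a(u := False)) (v @ y) = (b(u := False)) (v @ y)"
      proof (cases "length y < D")
        case True
        then show ?thesis using less u by simp
      next
        case False
        with \<open>length y \<le> D\<close> have "length y = D" by simp
        then show ?thesis
          using less.prems agree[of "v @ y"] not_dependent_append[of y v] u
          by (cases "y = replicate D False") auto
      qed
    qed
    moreover have "even (weight a v)" "even (weight b v)"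
      using assms(1,2) \<open>v \<noteq> []\<close> by (auto simp: admissible_def)
    ultimately show ?thesis using weight_split[OF u, of a] weight_split[OF u, of b]
      by (cases "a u"; cases "b u") auto
  qed
qed

definition patterns :: "(bool list \<Rightarrow> bool list) set" where
  "patterns = {proj (D + 2) (aut a) | a. \<forall>x. even (weight a [x])}"

definition K :: "(bool list \<Rightarrow> bool list) set" where
  "K = GP (D + 2) patterns"

lemma proj_aut_mem_patterns_iff: "proj (D + 2) (aut a) \<in> patterns \<longleftrightarrow> (\<forall>x. even (weight a [x]))"
proof
  assume "proj (D + 2) (aut a) \<in> patterns"
  then obtain b where "proj (D + 2) (aut a) = proj (D + 2) (aut b)" and b: "\<forall>x. even (weight b [x])"
    unfolding patterns_def by blast
  then have "weight a [x] = weight b [x]" for x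
    by (intro weight_cong) (simp add: proj_aut_eq_iff)
  with b show "\<forall>x. even (weight a [x])" by simp
qed (auto simp: patterns_def)

lemma K_eq_image: "K = aut ` Collect admissible"
proof -
  have "proj (D + 2) (sect (aut a) w) \<in> patterns \<longleftrightarrow> (\<forall>x. even (weight a (w @ [x])))" for a w
    by (simp add: sect_aut proj_aut_mem_patterns_iff weight_shift del: add_2_eq_Suc')
  then show ?thesis
    by (auto simp: K_def GP_def AutT_eq_range_aut admissible_iff_snoc)
qed

lemma aut_mem_K_iff: "aut a \<in> K \<longleftrightarrow> admissible a"
  by (auto simp: K_eq_image aut_eq_iff)

lemma K_subset_AutT: "K \<subseteq> AutT"
  by (auto simp: K_eq_image AutT_eq_range_aut)

lemma comp_mem_K: "g \<in> K \<Longrightarrow> h \<in> K \<Longrightarrow> g \<circ> h \<in> K"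
  by (auto simp: K_eq_image aut_comp admissible_portrait_mult)

lemma patterns_subgroup: "is_subgroup_of patterns (AutD (D + 2))"
  unfolding is_subgroup_of_def
proof (intro conjI ballI)
  show "patterns \<subseteq> AutD (D + 2)"
    by (auto simp: patterns_def AutD_eq_range)
  show "id \<in> patterns"
    using proj_aut_mem_patterns_iff[of "\<lambda>_. False"] by (simp add: aut_zero)
  fix p assume "p \<in> patterns"
  then obtain a where p: "p = proj (D + 2) (aut a)" and a: "\<forall>x. even (weight a [x])"
    unfolding patterns_def by blast
  have a': "even (weight a (aut b [x]))" for b x using a by simp
  show "p \<circ> q \<in> patterns" if "q \<in> patterns" for q
  proof -
    obtain b where q: "q = proj (D + 2) (aut b)" and "\<forall>x. even (weight b [x])"
      using \<open>q \<in> patterns\<close> unfolding patterns_def by blast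
    then have "\<forall>x. even (weight (portrait_mult a b) [x])"
      using a' by (simp add: even_weight_portrait_mult)
    then show ?thesis
      by (simp add: p q proj_comp aut_comp proj_aut_mem_patterns_iff del: add_2_eq_Suc')
  qed
  obtain b where b: "inv (aut a) = aut b" "portrait_mult a b = (\<lambda>_. False)"
    using inv_aut by blast
  have "aut a \<circ> aut b = id" using b(2) by (simp add: aut_comp aut_zero)
  moreover have "aut b \<circ> aut a = id" using b(1) by (metis bij_aut bij_is_inj inv_o_cancel)
  ultimately have "inv p = proj (D + 2) (aut b)" unfolding p by (intro inv_proj) auto
  moreover have "\<forall>x. even (weight b [x])" using a' b(2) even_weight_inverse by blast
  ultimately show "inv p \<in> patterns" by (simp add: proj_aut_mem_patterns_iff del: add_2_eq_Suc')
qed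

lemma essential_patterns: "essential_pattern_group (D + 2) patterns"
  unfolding essential_pattern_group_def
proof (intro conjI ballI allI patterns_subgroup)
  fix p i assume "p \<in> patterns"
  then obtain a where p: "p = proj (D + 2) (aut a)" unfolding patterns_def by blast
  define a\<^sub>i where "a\<^sub>i = (\<lambda>y. a (i # y))"
  define q where "q = proj (D + 2) (aut (completion a\<^sub>i))"
  have "q \<in> patterns"
    using admissible_completion[of a\<^sub>i]
    by (simp add: q_def proj_aut_mem_patterns_iff admissible_def del: add_2_eq_Suc')
  moreover have "proj (D + 1) q = proj (D + 1) (sect p [i])"
  proof -
    have "sect p [i] = proj (D + 1) (aut a\<^sub>i)"
      by (auto simp: sect_def p proj_def a\<^sub>i_def)
    moreover have "proj (D + 1) (aut (completion a\<^sub>i)) = proj (D + 1) (aut a\<^sub>i)"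
      by (simp add: proj_aut_eq_iff completion_depth_le)
    ultimately show ?thesis by (simp add: q_def proj_proj)
  qed
  ultimately show "\<exists>q\<in>patterns. proj (D + 2 - 1) q = proj (D + 2 - 1) (sect p [i])" by auto
qed

lemma constrained_K: "constrained_by_size (D + 2) K"
  unfolding constrained_by_size_def K_def using essential_patterns by blast

text \<open>A single label at depth \<open>D + 1\<close> violates admissibility at \<open>[False]\<close>, but every pattern of
  size at most \<open>D + 1\<close> of it is a pattern of an element of \<open>K\<close>.\<close>

lemma not_constrained_below: "d < D + 2 \<Longrightarrow> \<not> constrained_by_size d K"
proof
  assume "d < D + 2" "constrained_by_size d K"
  then obtain P where KP: "K = GP d P" unfolding constrained_by_size_def by blast
  define a where "a = (\<lambda>u. u = [False] @ replicate D False)"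
  have "weight a [False] = 1"
    using D_in_T by (simp add: weight_def a_def level_count_point)
  then have "aut a \<notin> K" by (auto simp: aut_mem_K_iff admissible_def intro!: exI[of _ "[False]"])
  moreover have "aut a \<in> GP d P"
    unfolding GP_def
  proof (intro CollectI conjI allI)
    show "aut a \<in> AutT" by (simp add: AutT_eq_range_aut)
    fix w
    define b where "b = (\<lambda>y. a (w @ y))"
    have "aut (completion b) \<in> K" by (simp add: aut_mem_K_iff admissible_completion)
    then have "proj d (sect (aut (completion b)) []) \<in> P"
      using KP by (simp add: GP_def)
    then have "proj d (aut (completion b)) \<in> P" by (simp add: sect_aut)
    moreover have "proj d (aut (completion b)) = proj d (aut b)"
      using \<open>d < D + 2\<close> by (simp add: proj_aut_eq_iff completion_depth_le)
    ultimately show "proj d (sect (aut a) w) \<in> P" by (simp add: sect_aut b_def)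
  qed
  ultimately show False using KP by simp
qed

lemma defined_by_patterns_K: "defined_by_patterns_of_size (D + 2) K"
  unfolding defined_by_patterns_of_size_def using constrained_K not_constrained_below by blast

lemma finitely_constrained_K: "finitely_constrained K"
  unfolding finitely_constrained_def using constrained_K by blast

subsection \<open>Hausdorff dimension\<close>

definition free :: "nat \<Rightarrow> bool list set" where
  "free n = {u. length u < n \<and> \<not> dependent u}"

lemma finite_free [simp]: "finite (free n)"
  by (rule finite_subset[of _ "{u. length u < n}"]) (auto simp: free_def)

lemma card_dependent_short:
  assumes "D < n"
  shows "card {u. length u < n \<and> dependent u} = 2 ^ (n - D) - 2"
proof -
  have "{u. length u < n \<and> dependent u}
      = (\<lambda>v. v @ replicate D False) ` {v. v \<noteq> [] \<and> length v < n - D}"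
  proof (intro equalityI subsetI)
    fix u assume "u \<in> {u. length u < n \<and> dependent u}"
    then have "length u < n" "u = base u @ replicate D False" "base u \<noteq> []"
      by (auto simp: dependent_def)
    moreover from this have "length (base u) < n - D"
      by (metis length_append length_replicate less_diff_conv)
    ultimately show "u \<in> (\<lambda>v. v @ replicate D False) ` {v. v \<noteq> [] \<and> length v < n - D}"
      by blast
  qed (auto simp: dependent_append)
  moreover have "inj (\<lambda>v :: bool list. v @ replicate D False)" by (rule injI) simp
  ultimately show ?thesis
    using assms by (simp add: card_image inj_on_subset card_nonempty_short_words)
qed

lemma card_free:
  assumes "D < n"
  shows "real (card (free n)) = 2 ^ n + 1 - 2 ^ n / 2 ^ D"
proof -
  have "free n = {u. length u < n} - {u. length u < n \<and> dependent u}" by (auto simp: free_def)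
  then have "card (free n)
      = card {u :: bool list. length u < n} - card {u. length u < n \<and> dependent u}"
    by (auto intro: card_Diff_subset finite_subset[OF _ finite_short_words])
  then have "card (free n) = (2 ^ n - 1) - (2 ^ (n - D) - 2)"
    by (simp only: card_short_words card_dependent_short[OF assms])
  moreover have "(2::nat) \<le> 2 ^ (n - D)"
    using assms power_increasing[of 1 "n - D" "2::nat"] by simp
  moreover have "(2::nat) ^ (n - D) \<le> 2 ^ n" by (rule power_increasing) simp_all
  ultimately have "card (free n) + 2 ^ (n - D) = 2 ^ n + 1" by linarith
  then have "real (card (free n) + 2 ^ (n - D)) = real (2 ^ n + 1)" by (rule arg_cong)
  then have "real (card (free n)) = 2 ^ n + 1 - 2 ^ (n - D)" by simp
  with assms show ?thesis by (simp add: power_diff)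
qed

text \<open>An element of \<open>K\<close> is determined by its labels at independent vertices, which are arbitrary.\<close>

lemma card_proj_K: "card (proj n ` K) = 2 ^ card (free n)"
proof -
  let ?c = "\<lambda>f. proj n (aut (completion f))"
  have "proj n ` K = ?c ` labellings_on (free n)"
  proof
    show "?c ` labellings_on (free n) \<subseteq> proj n ` K"
      using admissible_completion by (auto simp: K_eq_image)
    show "proj n ` K \<subseteq> ?c ` labellings_on (free n)"
    proof
      fix h assume "h \<in> proj n ` K"
      then obtain a where h: "h = proj n (aut a)" and "admissible a" by (auto simp: K_eq_image)
      define f where "f u = (a u \<and> u \<in> free n)" for u
      have "completion f u = a u" if "length u < n" for u
        using admissible_eq_if_agree_independent[OF admissible_completion \<open>admissible a\<close> _ that]
        by (auto simp: completion_independent f_def free_def)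
      then have "?c f = h" by (simp add: h proj_aut_eq_iff)
      moreover have "f \<in> labellings_on (free n)" by (simp add: f_def labellings_on_def)
      ultimately show "h \<in> ?c ` labellings_on (free n)" by blast
    qed
  qed
  moreover have "inj_on ?c (labellings_on (free n))"
  proof (rule inj_onI)
    fix f g assume f: "f \<in> labellings_on (free n)" and g: "g \<in> labellings_on (free n)"
      and "?c f = ?c g"
    then have "completion f u = completion g u" if "length u < n" for u
      using that by (simp add: proj_aut_eq_iff)
    then have "f u = g u" if "u \<in> free n" for u
      using that by (metis (mono_tags) completion_independent free_def mem_Collect_eq)
    with f g show "f = g" by (auto simp: fun_eq_iff labellings_on_def)
  qed
  ultimately show ?thesis by (simp add: card_image card_labellings_on)
qed

lemma Hdim_K: "Hdim K = ereal (1 - 1 / 2 ^ D)"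
proof -
  define r where "r n = (1 - 1 / 2 ^ D + 1 / 2 ^ n) / (1 - 1 / 2 ^ n :: real)" for n
  have "log 2 (card (proj n ` K)) / log 2 (card (AutD n)) = r n" if "D < n" for n
  proof -
    have "(1::real) < 2 ^ n" using that by (intro one_less_power) auto
    have "log 2 (card (proj n ` K)) / log 2 (card (AutD n)) = real (card (free n)) / (2 ^ n - 1)"
      by (simp add: card_proj_K card_AutD log_nat_power of_nat_diff)
    also have "\<dots> = r n"
      unfolding card_free[OF that] r_def using \<open>1 < 2 ^ n\<close> by (simp add: field_simps)
    finally show ?thesis .
  qed
  then have "Hdim K = liminf (\<lambda>n. ereal (r n))"
    unfolding Hdim_def by (intro Liminf_eq eventually_sequentiallyI[of "Suc D"]) simp
  moreover have "r \<longlonglongrightarrow> (1 - 1 / 2 ^ D + 0) / (1 - 0)"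
    unfolding r_def power_one_over[symmetric] by (intro tendsto_intros) auto
  ultimately show ?thesis by (simp add: lim_imp_Liminf)
qed

subsection \<open>Characters\<close>

definition half_weight :: "(bool list \<Rightarrow> bool) \<Rightarrow> bool list \<Rightarrow> nat" where
  "half_weight a w = (\<Sum>j\<in>T. level_count (j - 1) a w)"

lemma weight_eq_half_weight: "weight a v = half_weight a (v @ [False]) + half_weight a (v @ [True])"
proof -
  have "level_count j a v
      = level_count (j - 1) a (v @ [False]) + level_count (j - 1) a (v @ [True])" if "j \<in> T" for j
  proof -
    have "j = Suc (j - 1)" using that T_subset by force
    then show ?thesis by (metis level_count_Suc)
  qed
  then show ?thesis by (simp add: weight_def half_weight_def sum.distrib)
qed

lemma even_half_weight_mult:
  "even (half_weight (portrait_mult a b) w + half_weight b w + half_weight a (aut b w))"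
proof -
  have "half_weight (portrait_mult a b) w + half_weight b w + half_weight a (aut b w)
      = (\<Sum>j\<in>T. level_count (j - 1) (portrait_mult a b) w + level_count (j - 1) b w
          + level_count (j - 1) a (aut b w))"
    by (simp add: half_weight_def sum.distrib)
  then show ?thesis by (auto intro!: dvd_sum even_level_count_mult)
qed

definition character :: "nat \<Rightarrow> (bool list \<Rightarrow> bool) \<Rightarrow> bool" where
  "character i a = odd (\<Sum>v\<in>words i. half_weight a (v @ [False]))"

text \<open>Right multiplication by \<open>b\<close> permutes the vertices of depth \<open>i\<close>; where \<open>b\<close> swaps the children
  of \<open>v\<close>, admissibility of \<open>a\<close> at \<open>aut b v\<close> makes the two half weights congruent.\<close>

lemma character_mult:
  assumes "admissible a" "1 \<le> i"
  shows "character i (portrait_mult a b) = (character i a \<noteq> character i b)"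
proof -
  let ?S = "\<lambda>c. \<Sum>v\<in>words i. half_weight c (v @ [False])"
  let ?X = "\<Sum>v\<in>words i. half_weight a (aut b (v @ [False]))"
  have "even (?S (portrait_mult a b) + ?S b + ?X)"
    by (auto simp: sum.distrib[symmetric] intro!: dvd_sum even_half_weight_mult)
  moreover have "even (half_weight a (aut b (v @ [False])) + half_weight a (aut b v @ [False]))"
    if "v \<in> words i" for v
  proof (cases "b v")
    case True
    have "aut b v \<noteq> []" using that \<open>1 \<le> i\<close> by (auto simp: words_def)
    then have "even (weight a (aut b v))" using assms(1) by (simp add: admissible_def)
    with True show ?thesis by (simp add: aut_snoc weight_eq_half_weight add.commute)
  qed (simp add: aut_snoc)
  then have "even (?X + (\<Sum>v\<in>words i. half_weight a (aut b v @ [False])))"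
    by (auto simp: sum.distrib[symmetric] intro!: dvd_sum)
  moreover have "(\<Sum>v\<in>words i. half_weight a (aut b v @ [False])) = ?S a"
    by (rule sum.reindex_bij_betw[OF bij_betw_aut_words])
  ultimately have "even (?S (portrait_mult a b) + ?S b + ?S a)" by (simp add: even_add)
  then show ?thesis unfolding character_def by (simp only: even_add) blast
qed

lemma character_local:
  assumes "\<And>u. length u < n \<Longrightarrow> a u = b u" "i + D < n"
  shows "character i a = character i b"
proof -
  have "half_weight a (v @ [False]) = half_weight b (v @ [False])" if "v \<in> words i" for v
    unfolding half_weight_def
  proof (intro sum.cong refl level_count_cong)
    fix j and y :: "bool list" assume "j \<in> T" "length y = j - 1"
    with that assms(2) T_subset have "length ((v @ [False]) @ y) < n" by (auto simp: words_def)
    then show "a ((v @ [False]) @ y) = b ((v @ [False]) @ y)" by (rule assms(1))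
  qed
  then show ?thesis unfolding character_def by (metis (no_types, lifting) sum.cong)
qed

lemma Min_T: "Min T \<in> T" "j \<in> T \<Longrightarrow> Min T \<le> j"
  using D_in_T by (auto intro: Min_in)

lemma Min_T_eq_Suc: "\<exists>t. Min T = Suc t"
proof -
  have "1 \<le> Min T" using Min_T(1) T_subset by auto
  then show ?thesis by (intro exI[of _ "Min T - 1"]) simp
qed

text \<open>The ends of the two spikes differ only at depth \<open>i\<close>, so a vertex at distance at least
  \<open>Min T\<close> above them is an ancestor of both or of neither; hence \<open>twin_spikes i\<close> is admissible.\<close>

definition spike :: "nat \<Rightarrow> bool \<Rightarrow> bool list" where
  "spike i x = replicate i False @ x # replicate (Min T - 1) False"

definition twin_spikes :: "nat \<Rightarrow> bool list \<Rightarrow> bool" where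
  "twin_spikes i u \<longleftrightarrow> u = spike i False \<or> u = spike i True"

lemma level_count_twin_spikes:
  "level_count k (twin_spikes i) w
    = level_count k (\<lambda>u. u = spike i False) w + level_count k (\<lambda>u. u = spike i True) w"
  unfolding twin_spikes_def by (rule level_count_disj) (auto simp: spike_def)

lemma level_count_spike_eq:
  assumes "Min T \<le> k"
  shows "level_count k (\<lambda>u. u = spike i False) w = level_count k (\<lambda>u. u = spike i True) w"
proof (cases "length w \<le> i")
  case True
  then have "take (length w) (spike i x) = take (length w) (replicate i False)" for x
    by (simp add: spike_def)
  then show ?thesis by (simp add: level_count_point spike_def)
next
  case False
  obtain t where "Min T = Suc t" using Min_T_eq_Suc by blast
  with False assms show ?thesis by (simp add: level_count_point spike_def)
qed

lemma admissible_twin_spikes: "admissible (twin_spikes i)"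
proof -
  have "even (level_count j (twin_spikes i) v)" if "j \<in> T" for j v
    using level_count_spike_eq[OF Min_T(2)[OF that]] by (simp add: level_count_twin_spikes)
  then show ?thesis by (auto simp: admissible_def weight_def intro!: dvd_sum)
qed

lemma level_count_spike_top:
  assumes "length v = i" "Min T = Suc t"
  shows "level_count t (\<lambda>u. u = spike i0 x) (v @ [False])
    = (if i = i0 \<and> v = replicate i0 False \<and> \<not> x then 1 else 0)"
proof -
  have "take (Suc i0) (spike i0 x) = replicate i0 False @ [x]" by (simp add: spike_def)
  with assms show ?thesis by (auto simp: level_count_point spike_def)
qed

lemma character_twin_spikes:
  assumes "1 \<le> i"
  shows "character i (twin_spikes i0) = (i = i0)"
proof -
  obtain t where t: "Min T = Suc t" using Min_T_eq_Suc by blast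
  have "even (level_count (j - 1) (twin_spikes i0) w)" if "j \<in> T - {Min T}" for j w
  proof -
    have "Min T \<le> j" "j \<noteq> Min T" using that Min_T(2)[of j] by auto
    then have "Min T \<le> j - 1" by linarith
    then show ?thesis by (simp add: level_count_twin_spikes level_count_spike_eq)
  qed
  then have "even (\<Sum>j\<in>T - {Min T}. level_count (j - 1) (twin_spikes i0) w)" for w
    by (auto intro!: dvd_sum)
  moreover have "half_weight (twin_spikes i0) w
      = level_count t (twin_spikes i0) w + (\<Sum>j\<in>T - {Min T}. level_count (j - 1) (twin_spikes i0) w)"
    for w
    unfolding half_weight_def using Min_T(1) t by (simp add: sum.remove)
  ultimately have "even (half_weight (twin_spikes i0) (v @ [False])
      + (if i = i0 \<and> v = replicate i0 False then 1 else 0))" if "v \<in> words i" for v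
    using that t by (simp add: level_count_twin_spikes level_count_spike_top words_def)
  then have "even ((\<Sum>v\<in>words i. half_weight (twin_spikes i0) (v @ [False]))
      + (\<Sum>v\<in>words i. if i = i0 \<and> v = replicate i0 False then 1 else 0))"
    by (auto simp: sum.distrib[symmetric] intro!: dvd_sum)
  moreover have "(\<Sum>v\<in>words i. if i = i0 \<and> v = replicate i0 False then 1 else 0)
      = (if i = i0 then 1 else (0::nat))"
  proof -
    have "replicate i0 False \<in> words i0" by (simp add: words_def)
    then show ?thesis by (cases "i = i0") simp_all
  qed
  ultimately show ?thesis by (auto simp: character_def)
qed

lemma K_not_top_fin_gen: "\<not> top_fin_gen K"
proof (rule not_top_fin_gen_if_independent_characters)
  let ?chi = "\<lambda>i g. character (Suc i) (portrait g)"
  show "K \<subseteq> AutT" by (rule K_subset_AutT)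
  show "p \<circ> q \<in> K" if "p \<in> K" "q \<in> K" for p q using that by (rule comp_mem_K)
  show "?chi i (p \<circ> q) = (?chi i p \<noteq> ?chi i q)" if "p \<in> K" "q \<in> K" for i p q
    using that by (auto simp: K_eq_image aut_comp character_mult)
  show "?chi i p = ?chi i q"
    if "Suc i + D + 1 \<le> n" "p \<in> K" "q \<in> K" "proj n p = proj n q" for i n p q
    using that by (auto simp: K_eq_image proj_aut_eq_iff intro!: character_local[of n])
  show "\<exists>e\<in>K. \<forall>j. ?chi j e = (j = i)" for i
    using admissible_twin_spikes[of "Suc i"]
    by (intro bexI[of _ "aut (twin_spikes (Suc i))"])
      (simp_all add: character_twin_spikes aut_mem_K_iff)
qed

end

text \<open>For \<open>r \<in> T - T'\<close>, the admissible completion of a single label at depth \<open>r + 1\<close> has odd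
  \<open>T'\<close>-weight at \<open>[False]\<close>.\<close>

lemma parity_family_K_eq_imp_eq:
  assumes "parity_family D T" "parity_family D T'" "parity_family.K D T = parity_family.K D T'"
  shows "T = T'"
proof (rule ccontr)
  interpret A: parity_family D T by fact
  interpret B: parity_family D T' by fact
  assume "T \<noteq> T'"
  then obtain r where r: "r \<in> (T - T') \<union> (T' - T)" by blast
  then have "r \<noteq> D" "r \<in> {1..D}" using A.D_in_T B.D_in_T A.T_subset B.T_subset by auto
  then have "1 \<le> r" "r < D" by auto
  define a where "a = A.completion (\<lambda>u. u = False # replicate r False)"
  have "A.admissible a" unfolding a_def by (rule A.admissible_completion)
  then have "even (A.weight a [False])" by (simp add: A.admissible_def)
  moreover have "\<And>u. length u \<le> D \<Longrightarrow> a u = (u = False # replicate r False)"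
    by (simp add: a_def A.completion_depth_le)
  ultimately have "odd (B.weight a [False])"
    using A.weight_at_spike B.weight_at_spike \<open>1 \<le> r\<close> \<open>r < D\<close> r by auto
  then have "aut a \<notin> B.K"
    by (auto simp: B.aut_mem_K_iff B.admissible_def intro!: exI[of _ "[False]"])
  moreover have "aut a \<in> A.K" using \<open>A.admissible a\<close> by (simp add: A.aut_mem_K_iff)
  ultimately show False using assms(3) by simp
qed

lemma card_parity_family_groups:
  assumes "1 \<le> D"
  shows "card (parity_family.K D ` Collect (parity_family D)) = 2 ^ (D - 1)"
proof -
  have "inj_on (parity_family.K D) (Collect (parity_family D))"
    by (rule inj_onI) (use parity_family_K_eq_imp_eq in blast)
  moreover have "bij_betw (\<lambda>T. T - {D}) (Collect (parity_family D)) (Pow {1..<D})"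
    by (rule bij_betw_byWitness[where f' = "insert D"])
      (use assms in \<open>force simp: parity_family_def\<close>)+
  ultimately show ?thesis by (simp add: card_image bij_betw_same_card card_Pow)
qed

theorem mainTheorem16:
  fixes d :: nat
  assumes "d \<ge> 4"
  shows "\<exists>F. finite F \<and> 2 ^ (d - 3) \<le> card F \<and>
    (\<forall>K\<in>F. finitely_constrained K \<and> defined_by_patterns_of_size d K
       \<and> Hdim K = ereal (1 - 2 / 2 ^ (d - 1)) \<and> \<not> top_fin_gen K)"
proof -
  define D where "D = d - 2"
  have d: "d = D + 2" "d - 3 = D - 1" "1 \<le> D" using assms by (simp_all add: D_def)
  then have "(2::real) / 2 ^ (d - 1) = 1 / 2 ^ D" by simp
  then have "finitely_constrained K \<and> defined_by_patterns_of_size d K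
      \<and> Hdim K = ereal (1 - 2 / 2 ^ (d - 1)) \<and> \<not> top_fin_gen K"
    if "K \<in> parity_family.K D ` Collect (parity_family D)" for K
    using that parity_family.finitely_constrained_K parity_family.defined_by_patterns_K
      parity_family.Hdim_K parity_family.K_not_top_fin_gen d(1) by auto
  moreover have "finite (parity_family.K D ` Collect (parity_family D))"
    by (rule finite_imageI, rule finite_subset[of _ "Pow {1..D}"])
      (auto simp: parity_family_def subset_iff)
  ultimately show ?thesis using card_parity_family_groups[OF d(3)] d(2) by (metis order_refl)
qed

end
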